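(* Let $\hat{\mathcal U}(\mathfrak L)$ (resp. $\hat{\mathcal U}(\mathfrak H)$) be the subgroup of $PSL(2,\mathfrak L)$ (resp. $PSL(2,\mathfrak H)$) consisting of the elements that fix the point $1\in\mathbf H^1_{\mathbb H}$. Then $\hat{\mathcal U}(\mathfrak L)$ is generated by $T$ and $\mathcal U(\mathfrak L)$, and $\hat{\mathcal U}(\mathfrak H)$ is generated by $T$ and $\mathcal U(\mathfrak H)$. Moreover $T$ commutes with every element of $\mathcal U(\mathfrak H)$, so that $\hat{\mathcal U}(\mathfrak L)\cong\mathbb Z/2\mathbb Z\oplus\mathcal U(\mathfrak L)$ and $\hat{\mathcal U}(\mathfrak H)\cong\mathbb Z/2\mathbb Z\oplus\mathcal U(\mathfrak H)$.
   Context: $\mathbb H$ is the real quaternions, $\mathbf H^1_{\mathbb H}=\{q\in\mathbb H:\Re q>0\}$. Quaternionic matrices act by $q\mapsto(aq+b)(cq+d)^{-1}$, modulo nonzero real scalars. $\Im\mathbb H(\mathbb Z)=\{b\mathbf i+c\mathbf j+d\mathbf k:b,c,d\in\mathbb Z\}$; $\tau_\omega(q)=q+\omega$; $T(q)=q^{-1}$ (matrix $\begin{pmatrix}0&1\\1&0\end{pmatrix}$). Lipschitz units: $\pm1,\pm\mathbf i,\pm\mathbf j,\pm\mathbf k$; Hurwitz units: these together with $\frac12(\pm1\pm\mathbf i\pm\mathbf j\pm\mathbf k)$. For a unit $u$, $D_u=\begin{pmatrix}u&0\\0&u\end{pmatrix}$ acts by $q\mapsto uqu^{-1}$. $\mathcal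 U(\mathfrak L)=\{D_u:u\text{ Lipschitz unit}\}\cong\mathbb Z/2\mathbb Z\oplus\mathbb Z/2\mathbb Z$ and $\mathcal U(\mathfrak H)=\{D_u:u\text{ Hurwitz unit}\}$ (order 12). $PSL(2,\mathfrak L)$ is generated by $T$ and the $\tau_\omega$, $\omega\in\Im\mathbb H(\mathbb Z)$; $PSL(2,\mathfrak H)$ is generated by $T$, the $\tau_\omega$ and $\mathcal U(\mathfrak H)$. *)

theory Defs
  imports Complex_Main "HOL-Algebra.Algebra"
begin

datatype quat = Quat (qre: real) (qi: real) (qj: real) (qk: real)

definition qadd :: "quat \<Rightarrow> quat \<Rightarrow> quat" where
  "qadd p q = Quat (qre p + qre q) (qi p + qi q) (qj p + qj q) (qk p + qk q)"

definition qneg :: "quat \<Rightarrow> quat" where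
  "qneg p = Quat (- qre p) (- qi p) (- qj p) (- qk p)"

definition qmul :: "quat \<Rightarrow> quat \<Rightarrow> quat" where
  "qmul p q = Quat
     (qre p * qre q - qi p * qi q - qj p * qj q - qk p * qk q)
     (qre p * qi q + qi p * qre q + qj p * qk q - qk p * qj q)
     (qre p * qj q - qi p * qk q + qj p * qre q + qk p * qi q)
     (qre p * qk q + qi p * qj q - qj p * qi q + qk p * qre q)"

definition qnormsq :: "quat \<Rightarrow> real" where
  "qnormsq p = (qre p)\<^sup>2 + (qi p)\<^sup>2 + (qj p)\<^sup>2 + (qk p)\<^sup>2"

text \<open>Inverse (conjugate divided by squared norm; 0 is sent to 0).\<close>
definition qinv :: "quat \<Rightarrow> quat" where
  "qinv p = Quat (qre p / qnormsq p) (- qi p / qnormsq p) (- qj p / qnormsq p) (- qk p / qnormsq p)"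

definition qreal :: "real \<Rightarrow> quat" where
  "qreal r = Quat r 0 0 0"

definition qzero :: quat where "qzero = Quat 0 0 0 0"
definition qone :: quat where "qone = Quat 1 0 0 0"

definition ImHZ :: "quat set" where
  "ImHZ = {Quat 0 (of_int b) (of_int c) (of_int d) | b c d. True}"

definition lipschitz_units :: "quat set" where
  "lipschitz_units = {Quat 1 0 0 0, Quat (-1) 0 0 0, Quat 0 1 0 0, Quat 0 (-1) 0 0,
                      Quat 0 0 1 0, Quat 0 0 (-1) 0, Quat 0 0 0 1, Quat 0 0 0 (-1)}"

definition hurwitz_units :: "quat set" where
  "hurwitz_units = lipschitz_units \<union>
     {Quat a b c d | a b c d. a \<in> {1/2, -1/2} \<and> b \<in> {1/2, -1/2} \<and> c \<in> {1/2, -1/2} \<and> d \<in> {1/2, -1/2}}"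

text \<open>\<open>QM a b c d\<close> is the matrix with rows (a b) and (c d).\<close>
datatype qmat = QM quat quat quat quat

fun mmul :: "qmat \<Rightarrow> qmat \<Rightarrow> qmat" where
  "mmul (QM a b c d) (QM a' b' c' d') =
     QM (qadd (qmul a a') (qmul b c')) (qadd (qmul a b') (qmul b d'))
        (qadd (qmul c a') (qmul d c')) (qadd (qmul c b') (qmul d d'))"

fun mscale :: "real \<Rightarrow> qmat \<Rightarrow> qmat" where
  "mscale r (QM a b c d) = QM (qmul (qreal r) a) (qmul (qreal r) b) (qmul (qreal r) c) (qmul (qreal r) d)"

definition mid :: qmat where "mid = QM qone qzero qzero qone"

definition minvertible :: "qmat \<Rightarrow> bool" where
  "minvertible M \<longleftrightarrow> (\<exists>N. mmul M N = mid \<and> mmul N M = mid)"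

fun mob :: "qmat \<Rightarrow> quat \<Rightarrow> quat" where
  "mob (QM a b c d) q = qmul (qadd (qmul a q) b) (qinv (qadd (qmul c q) d))"

definition Tm :: qmat where "Tm = QM qzero qone qone qzero"
definition taum :: "quat \<Rightarrow> qmat" where "taum w = QM qone w qzero qone"
definition Dm :: "quat \<Rightarrow> qmat" where "Dm u = QM u qzero qzero u"

definition cls :: "qmat \<Rightarrow> qmat set" where
  "cls M = {mscale r M | r. r \<noteq> 0}"

definition pgl_mult :: "qmat set \<Rightarrow> qmat set \<Rightarrow> qmat set" where
  "pgl_mult A B = {mmul m n | m n. m \<in> A \<and> n \<in> B}"

definition PGL :: "qmat set monoid" where
  "PGL = \<lparr> carrier = cls ` {M. minvertible M},
           monoid.mult = pgl_mult,
           one = cls mid \<rparr>"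

definition PSL2L :: "qmat set set" where
  "PSL2L = generate PGL ({cls Tm} \<union> {cls (taum w) | w. w \<in> ImHZ})"

definition UL :: "qmat set set" where
  "UL = {cls (Dm u) | u. u \<in> lipschitz_units}"

definition UH :: "qmat set set" where
  "UH = {cls (Dm u) | u. u \<in> hurwitz_units}"

definition PSL2H :: "qmat set set" where
  "PSL2H = generate PGL ({cls Tm} \<union> {cls (taum w) | w. w \<in> ImHZ} \<union> UH)"

text \<open>Stabilisers of the point 1 (the action is independent of the representative).\<close>
definition UhatL :: "qmat set set" where
  "UhatL = {A \<in> PSL2L. \<forall>m \<in> A. mob m qone = qone}"

definition UhatH :: "qmat set set" where
  "UhatH = {A \<in> PSL2H. \<forall>m \<in> A. mob m qone = qone}"

end

theory Submission
  imports Defs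
begin

text \<open>Every class in \<open>PSL(2, \<L>)\<close> has a representative \<open>M\<close> with Lipschitz-integral entries and
  \<open>M\<^sup>* T M = T\<close>: the generators have both properties and both are multiplicative. In the Hurwitz case
  one gets \<open>M D\<^sub>u\<close> with such an \<open>M\<close> and a Hurwitz unit \<open>u\<close>, because conjugation by Hurwitz units
  preserves the Lipschitz order. If \<open>M = (a b; c d)\<close> fixes \<open>1\<close> then \<open>a + b = c + d\<close>, and the
  relation \<open>M\<^sup>* T M = T\<close> forces \<open>c = b\<close>, \<open>d = a\<close> and \<open>|a|\<^sup>2 + |b|\<^sup>2 = 1\<close>; integrality leaves only
  \<open>D\<^sub>v\<close> and \<open>T D\<^sub>v\<close> with \<open>v\<close> a Lipschitz unit. Since \<open>T\<close> is an involution commuting with every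
  \<open>D\<^sub>u\<close> and is not of the form \<open>D\<^sub>u\<close>, the stabiliser \<open>U \<union> T U\<close> is generated by \<open>T\<close> and \<open>U\<close> and is
  isomorphic to \<open>\<int>/2 \<times> U\<close>.\<close>

section \<open>Central involutions\<close>

context group
begin

context
  fixes H t
  assumes H: "subgroup H G" and t: "t \<in> carrier G" and t_square: "t \<otimes> t = \<one>"
    and t_comm: "\<And>h. h \<in> H \<Longrightarrow> t \<otimes> h = h \<otimes> t"
begin

private lemma mult_left_commute_involution: "h \<in> H \<Longrightarrow> k \<in> H \<Longrightarrow> h \<otimes> (t \<otimes> k) = t \<otimes> (h \<otimes> k)"
proof -
  assume h: "h \<in> H" and k: "k \<in> H"
  note hk = subgroup.mem_carrier[OF H h] subgroup.mem_carrier[OF H k]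
  have "h \<otimes> (t \<otimes> k) = (h \<otimes> t) \<otimes> k" by (rule m_assoc[OF hk(1) t hk(2), symmetric])
  also have "\<dots> = (t \<otimes> h) \<otimes> k" by (subst t_comm[OF h]) (rule refl)
  also have "\<dots> = t \<otimes> (h \<otimes> k)" by (rule m_assoc[OF t hk])
  finally show ?thesis .
qed

private lemma involution_coset_mult: "h \<in> H \<Longrightarrow> k \<in> H \<Longrightarrow> (t \<otimes> h) \<otimes> (t \<otimes> k) = h \<otimes> k"
proof -
  assume h: "h \<in> H" and k: "k \<in> H"
  note hk = subgroup.mem_carrier[OF H h] subgroup.mem_carrier[OF H k]
  have "(t \<otimes> h) \<otimes> (t \<otimes> k) = t \<otimes> (h \<otimes> (t \<otimes> k))" using hk t by (simp add: m_assoc)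
  also have "\<dots> = (t \<otimes> t) \<otimes> (h \<otimes> k)" using mult_left_commute_involution[OF h k] hk t by (simp add: m_assoc)
  also have "\<dots> = h \<otimes> k" using hk t t_square by simp
  finally show ?thesis .
qed

lemma subgroup_union_image_central_involution: "subgroup (H \<union> (\<lambda>h. t \<otimes> h) ` H) G"
proof (rule subgroupI)
  note HG = subgroup.mem_carrier[OF H] and mult_H = subgroup.m_closed[OF H]
    and inv_H = subgroup.m_inv_closed[OF H]
  show "H \<union> (\<lambda>h. t \<otimes> h) ` H \<subseteq> carrier G" using HG t by auto
  show "H \<union> (\<lambda>h. t \<otimes> h) ` H \<noteq> {}" using subgroup.one_closed[OF H] by blast
  show "inv x \<in> H \<union> (\<lambda>h. t \<otimes> h) ` H" if "x \<in> H \<union> (\<lambda>h. t \<otimes> h) ` H" for x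
    using that
  proof
    assume "x \<in> (\<lambda>h. t \<otimes> h) ` H"
    then obtain h where h: "h \<in> H" and x: "x = t \<otimes> h" by blast
    have "inv t = t" using t t_square by (simp add: inv_char)
    then have "inv x = t \<otimes> inv h"
      unfolding x using t_comm[OF inv_H[OF h]] HG[OF h] t by (simp add: inv_mult_group)
    then show ?thesis using inv_H[OF h] by blast
  qed (simp add: inv_H)
  show "x \<otimes> y \<in> H \<union> (\<lambda>h. t \<otimes> h) ` H"
    if "x \<in> H \<union> (\<lambda>h. t \<otimes> h) ` H" "y \<in> H \<union> (\<lambda>h. t \<otimes> h) ` H" for x y
    using that
  proof (elim UnE imageE)
    fix h k assume "h \<in> H" "k \<in> H" "x = t \<otimes> h" "y = t \<otimes> k"
    then show ?thesis using involution_coset_mult mult_H by simp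
  next
    fix h assume "h \<in> H" "x = t \<otimes> h" "y \<in> H"
    then show ?thesis using mult_H HG t by (simp add: m_assoc)
  next
    fix k assume "x \<in> H" "k \<in> H" "y = t \<otimes> k"
    then show ?thesis using mult_left_commute_involution mult_H by simp
  qed (simp add: mult_H)
qed

lemma generate_insert_central_involution: "generate G ({t} \<union> H) = H \<union> (\<lambda>h. t \<otimes> h) ` H"
proof
  have "t \<in> (\<lambda>h. t \<otimes> h) ` H"
    using t subgroup.one_closed[OF H] by (intro image_eqI[of _ _ \<one>]) simp_all
  then show "generate G ({t} \<union> H) \<subseteq> H \<union> (\<lambda>h. t \<otimes> h) ` H"
    by (intro generate_subgroup_incl[OF _ subgroup_union_image_central_involution]) blast
  show "H \<union> (\<lambda>h. t \<otimes> h) ` H \<subseteq> generate G ({t} \<union> H)"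
  proof (intro Un_least subsetI)
    show "h \<in> generate G ({t} \<union> H)" if "h \<in> H" for h
      using that by (intro generate.incl) auto
  next
    fix x assume "x \<in> (\<lambda>h. t \<otimes> h) ` H"
    then obtain h where h: "h \<in> H" and x: "x = t \<otimes> h" by blast
    have "t \<in> generate G ({t} \<union> H)" "h \<in> generate G ({t} \<union> H)"
      using h by (auto intro: generate.incl)
    then show "x \<in> generate G ({t} \<union> H)"
      unfolding x by (rule generate.eng)
  qed
qed

lemma iso_union_image_central_involution:
  assumes t_notin: "t \<notin> H"
  shows "G\<lparr>carrier := H \<union> (\<lambda>h. t \<otimes> h) ` H\<rparr> \<cong> integer_mod_group 2 \<times>\<times> G\<lparr>carrier := H\<rparr>"
proof -
  define \<phi> where "\<phi> = (\<lambda>(e::int, h). if e = 0 then h else t \<otimes> h)"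
  note HG = subgroup.mem_carrier[OF H]
  have Z2: "carrier (integer_mod_group 2) = {0, 1}" by (auto simp: carrier_integer_mod_group)
  then have car: "carrier (integer_mod_group 2 \<times>\<times> G\<lparr>carrier := H\<rparr>) = {0, 1} \<times> H" by simp
  have "\<phi> \<in> hom (integer_mod_group 2 \<times>\<times> G\<lparr>carrier := H\<rparr>) (G\<lparr>carrier := H \<union> (\<lambda>h. t \<otimes> h) ` H\<rparr>)"
  proof (rule homI)
    show "\<phi> x \<in> carrier (G\<lparr>carrier := H \<union> (\<lambda>h. t \<otimes> h) ` H\<rparr>)"
      if x: "x \<in> carrier (integer_mod_group 2 \<times>\<times> G\<lparr>carrier := H\<rparr>)" for x
    proof -
      obtain e h where "x = (e, h)" "e \<in> {0, 1}" "h \<in> H" using x unfolding car by blast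
      then show ?thesis by (auto simp: \<phi>_def)
    qed
    show "\<phi> (x \<otimes>\<^bsub>integer_mod_group 2 \<times>\<times> G\<lparr>carrier := H\<rparr>\<^esub> y) = \<phi> x \<otimes>\<^bsub>G\<lparr>carrier := H \<union> (\<lambda>h. t \<otimes> h) ` H\<rparr>\<^esub> \<phi> y"
      if xy: "x \<in> carrier (integer_mod_group 2 \<times>\<times> G\<lparr>carrier := H\<rparr>)"
         "y \<in> carrier (integer_mod_group 2 \<times>\<times> G\<lparr>carrier := H\<rparr>)" for x y
    proof -
      obtain e h f k where x: "x = (e, h)" and y: "y = (f, k)" and ef: "e \<in> {0, 1}" "f \<in> {0, 1}"
        and hk: "h \<in> H" "k \<in> H"
        using xy unfolding car by blast
      have "x \<otimes>\<^bsub>integer_mod_group 2 \<times>\<times> G\<lparr>carrier := H\<rparr>\<^esub> y = ((e + f) mod 2, h \<otimes> k)"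
        by (simp add: x y)
      with ef show ?thesis
        by (auto simp: \<phi>_def x y involution_coset_mult[OF hk] mult_left_commute_involution[OF hk]
            m_assoc[OF t subgroup.mem_carrier[OF H hk(1)] subgroup.mem_carrier[OF H hk(2)]])
    qed
  qed
  moreover have "inj_on \<phi> ({0, 1} \<times> H)"
  proof (rule inj_onI, clarify)
    fix e h f k assume eh: "e \<in> {0, 1}" "h \<in> H" and fk: "f \<in> {0, 1}" "k \<in> H"
      and eq: "\<phi> (e, h) = \<phi> (f, k)"
    have not_coset: "h \<noteq> t \<otimes> k" if "h \<in> H" "k \<in> H" for h k
    proof
      assume "h = t \<otimes> k"
      then have "t = h \<otimes> inv k" using HG[OF that(2)] t by (simp add: m_assoc)
      then show False
        using t_notin subgroup.m_closed[OF H that(1) subgroup.m_inv_closed[OF H that(2)]] by simp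
    qed
    show "e = f \<and> h = k"
    proof (cases "e = 0"; cases "f = 0")
      assume "e \<noteq> 0" "f \<noteq> 0"
      then show ?thesis
        using eq eh fk HG[OF eh(2)] HG[OF fk(2)] t by (auto simp: \<phi>_def)
    qed (use eq eh fk not_coset not_coset[THEN not_sym] in \<open>simp_all add: \<phi>_def\<close>)
  qed
  moreover have "\<phi> ` ({0, 1} \<times> H) = H \<union> (\<lambda>h. t \<otimes> h) ` H"
  proof -
    have "{0, 1} \<times> H = Pair 0 ` H \<union> Pair 1 ` H" by blast
    then have "\<phi> ` ({0, 1} \<times> H) = (\<lambda>h. \<phi> (0, h)) ` H \<union> (\<lambda>h. \<phi> (1, h)) ` H"
      by (metis image_Un image_image)
    then show ?thesis by (simp add: \<phi>_def)
  qed
  ultimately have "\<phi> \<in> iso (integer_mod_group 2 \<times>\<times> G\<lparr>carrier := H\<rparr>) (G\<lparr>carrier := H \<union> (\<lambda>h. t \<otimes> h) ` H\<rparr>)"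
    by (simp add: iso_iff Z2)
  then show ?thesis
    by (rule group.iso_sym[OF DirProd_group[OF group_integer_mod_group subgroup_imp_group[OF H]] is_isoI])
qed

end

end

section \<open>Quaternions and their units\<close>

lemma quat_eq_iff: "p = q \<longleftrightarrow> qre p = qre q \<and> qi p = qi q \<and> qj p = qj q \<and> qk p = qk q"
  by (cases p; cases q) auto

instantiation quat :: ring_1
begin
definition zero_quat_def: "0 = qzero"
definition one_quat_def: "1 = qone"
definition plus_quat_def: "p + q = qadd p q"
definition uminus_quat_def: "- p = qneg p"
definition minus_quat_def: "p - q = qadd p (qneg q)"
definition times_quat_def: "p * q = qmul p q"
instance
  by standard (simp_all add: quat_eq_iff zero_quat_def one_quat_def plus_quat_def uminus_quat_def
      minus_quat_def times_quat_def qadd_def qneg_def qmul_def qzero_def qone_def algebra_simps)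
end

lemma quat_ops_ring_1: "qadd p q = p + q" "qmul p q = p * q" "qneg p = - p" "qzero = 0" "qone = 1"
  by (simp_all add: zero_quat_def one_quat_def plus_quat_def uminus_quat_def times_quat_def)

lemma quat_components [simp]:
  "qre (p + q) = qre p + qre q" "qi (p + q) = qi p + qi q" "qj (p + q) = qj p + qj q" "qk (p + q) = qk p + qk q"
  "qre (p - q) = qre p - qre q" "qi (p - q) = qi p - qi q" "qj (p - q) = qj p - qj q" "qk (p - q) = qk p - qk q"
  "qre (- p) = - qre p" "qi (- p) = - qi p" "qj (- p) = - qj p" "qk (- p) = - qk p"
  "qre 0 = 0" "qi 0 = 0" "qj 0 = 0" "qk 0 = 0"
  "qre 1 = 1" "qi 1 = 0" "qj 1 = 0" "qk 1 = 0"
  "qre (p * q) = qre p * qre q - qi p * qi q - qj p * qj q - qk p * qk q"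
  "qi (p * q) = qre p * qi q + qi p * qre q + qj p * qk q - qk p * qj q"
  "qj (p * q) = qre p * qj q - qi p * qk q + qj p * qre q + qk p * qi q"
  "qk (p * q) = qre p * qk q + qi p * qj q - qj p * qi q + qk p * qre q"
  by (simp_all add: zero_quat_def one_quat_def plus_quat_def uminus_quat_def
      minus_quat_def times_quat_def qadd_def qneg_def qmul_def qzero_def qone_def)

lemma quat_of_nat_components:
  "qre (of_nat n) = of_nat n" "qi (of_nat n) = 0" "qj (of_nat n) = 0" "qk (of_nat n) = 0"
  by (induction n) (simp_all add: of_nat_Suc)

lemma quat_numeral_components:
  "qre (numeral n) = numeral n" "qi (numeral n) = 0" "qj (numeral n) = 0" "qk (numeral n) = 0"
  using quat_of_nat_components[of "numeral n"] by simp_all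

lemma qreal_components [simp]: "qre (qreal r) = r" "qi (qreal r) = 0" "qj (qreal r) = 0" "qk (qreal r) = 0"
  by (simp_all add: qreal_def)

lemma qreal_commute: "qreal r * q = q * qreal r"
  by (simp add: quat_eq_iff)

lemma qreal_mult: "qreal r * qreal s = qreal (r * s)"
  by (simp add: quat_eq_iff)

lemma qreal_1 [simp]: "qreal 1 = 1"
  by (simp add: quat_eq_iff)

lemma qreal_mult_eq_0_iff: "qreal r * q = 0 \<longleftrightarrow> r = 0 \<or> q = 0"
  by (auto simp: quat_eq_iff)

definition qcnj :: "quat \<Rightarrow> quat" where
  "qcnj q = Quat (qre q) (- qi q) (- qj q) (- qk q)"

lemma qcnj_components [simp]:
  "qre (qcnj q) = qre q" "qi (qcnj q) = - qi q" "qj (qcnj q) = - qj q" "qk (qcnj q) = - qk q"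
  by (simp_all add: qcnj_def)

lemma qcnj_Quat: "qcnj (Quat a b c d) = Quat a (- b) (- c) (- d)"
  by (simp add: qcnj_def)

lemma qcnj_0 [simp]: "qcnj 0 = 0"
  and qcnj_1 [simp]: "qcnj 1 = 1"
  by (simp_all add: quat_eq_iff)

lemma qcnj_add: "qcnj (p + q) = qcnj p + qcnj q"
  by (simp add: quat_eq_iff)

lemma qcnj_mult: "qcnj (p * q) = qcnj q * qcnj p"
  by (simp add: quat_eq_iff algebra_simps)

lemma qcnj_mult_self: "qcnj q * q = qreal (qnormsq q)" "q * qcnj q = qreal (qnormsq q)"
  by (simp_all add: quat_eq_iff qnormsq_def power2_eq_square algebra_simps)

lemma qnormsq_nonneg: "0 \<le> qnormsq q"
  by (simp add: qnormsq_def)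

lemma qnormsq_eq_0_iff: "qnormsq q = 0 \<longleftrightarrow> q = 0"
  by (auto simp: qnormsq_def quat_eq_iff add_nonneg_eq_0_iff)

lemma qcnj_mult_self_eq_1:
  assumes "qnormsq u = 1"
  shows "qcnj u * u = 1" "u * qcnj u = 1"
  using assms by (simp_all add: qcnj_mult_self)

lemma qinv_inverse:
  assumes "q \<noteq> 0"
  shows "qinv q * q = 1" "q * qinv q = 1"
proof -
  have n: "qnormsq q \<noteq> 0" using assms by (simp add: qnormsq_eq_0_iff)
  have qinv: "qinv q = qreal (1 / qnormsq q) * qcnj q"
    by (simp add: quat_eq_iff qinv_def)
  show "qinv q * q = 1"
    using n by (simp add: qinv mult.assoc qcnj_mult_self qreal_mult)
  have "q * qinv q = qreal (1 / qnormsq q) * (q * qcnj q)"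
    by (simp add: qinv qreal_commute mult.assoc)
  then show "q * qinv q = 1"
    using n by (simp add: qcnj_mult_self qreal_mult)
qed

lemma qinv_0: "qinv 0 = 0"
  by (simp add: quat_eq_iff qinv_def)

lemma mult_qinv_eq_1_iff: "p * qinv q = 1 \<longleftrightarrow> q \<noteq> 0 \<and> p = q"
proof (cases "q = 0")
  case False
  show ?thesis
  proof
    assume p: "p * qinv q = 1"
    have "p = p * (qinv q * q)" using qinv_inverse[OF False] by simp
    also have "\<dots> = q" using p by (simp add: mult.assoc[symmetric])
    finally show "q \<noteq> 0 \<and> p = q" using False by simp
  qed (use qinv_inverse[OF False] in simp)
qed (simp add: qinv_0)

lemma lipschitz_units_qnormsq: "u \<in> lipschitz_units \<Longrightarrow> qnormsq u = 1"
  by (auto simp: lipschitz_units_def qnormsq_def)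

lemma hurwitz_unitsE:
  assumes "u \<in> hurwitz_units"
  obtains "u \<in> lipschitz_units"
    | a b c d where "u = Quat a b c d"
      "a \<in> {1/2, -1/2}" "b \<in> {1/2, -1/2}" "c \<in> {1/2, -1/2}" "d \<in> {1/2, -1/2}"
  using assms unfolding hurwitz_units_def by blast

lemma hurwitz_units_qnormsq:
  assumes "u \<in> hurwitz_units"
  shows "qnormsq u = 1"
proof -
  have sq: "x\<^sup>2 = 1/4" if "x \<in> {1/2, -1/2}" for x :: real
    using that by (elim insertE emptyE; hypsubst; simp add: power2_eq_square)
  from assms show ?thesis
    by (cases rule: hurwitz_unitsE) (simp add: lipschitz_units_qnormsq, simp add: qnormsq_def sq)
qed

lemma Quat_mult: "Quat a b c d * Quat e f g h = Quat (a*e - b*f - c*g - d*h) (a*f + b*e + c*h - d*g)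
   (a*g - b*h + c*e + d*f) (a*h + b*g - c*f + d*e)"
  by (simp add: quat_eq_iff)

lemma lipschitz_units_mult: "u \<in> lipschitz_units \<Longrightarrow> v \<in> lipschitz_units \<Longrightarrow> u * v \<in> lipschitz_units"
  unfolding lipschitz_units_def by (auto simp: Quat_mult)

lemma lipschitz_units_qcnj: "u \<in> lipschitz_units \<Longrightarrow> qcnj u \<in> lipschitz_units"
  by (auto simp: lipschitz_units_def qcnj_Quat)

lemma lipschitz_units_subset: "lipschitz_units \<subseteq> hurwitz_units"
  by (auto simp: hurwitz_units_def)

lemma one_in_lipschitz_units: "1 \<in> lipschitz_units"
  by (simp add: lipschitz_units_def quat_eq_iff)

lemma Quat_half_in_hurwitz_units:
  "a \<in> {1/2, -1/2} \<Longrightarrow> b \<in> {1/2, -1/2} \<Longrightarrow> c \<in> {1/2, -1/2} \<Longrightarrow> d \<in> {1/2, -1/2}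
    \<Longrightarrow> Quat a b c d \<in> hurwitz_units"
  unfolding hurwitz_units_def by blast

lemma hurwitz_units_qcnj:
  assumes "u \<in> hurwitz_units"
  shows "qcnj u \<in> hurwitz_units"
  using assms
proof (cases rule: hurwitz_unitsE)
  case 1
  then show ?thesis using lipschitz_units_qcnj lipschitz_units_subset by blast
next
  case (2 a b c d)
  have neg: "- x \<in> {1/2, -1/2}" if "x \<in> {1/2, -1/2}" for x :: real
    using that by auto
  show ?thesis
    unfolding 2 qcnj_Quat by (intro Quat_half_in_hurwitz_units neg) (use 2 in simp_all)
qed

definition lipschitz_integral :: "quat \<Rightarrow> bool" where
  "lipschitz_integral q \<longleftrightarrow> qre q \<in> \<int> \<and> qi q \<in> \<int> \<and> qj q \<in> \<int> \<and> qk q \<in> \<int>"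

lemma lipschitz_integral_add: "lipschitz_integral p \<Longrightarrow> lipschitz_integral q \<Longrightarrow> lipschitz_integral (p + q)"
  by (simp add: lipschitz_integral_def)

lemma lipschitz_integral_mult: "lipschitz_integral p \<Longrightarrow> lipschitz_integral q \<Longrightarrow> lipschitz_integral (p * q)"
  by (simp add: lipschitz_integral_def)

lemma lipschitz_integral_qreal_mult: "r \<in> \<int> \<Longrightarrow> lipschitz_integral q \<Longrightarrow> lipschitz_integral (qreal r * q)"
  by (simp add: lipschitz_integral_def)

lemma lipschitz_integral_0 [simp]: "lipschitz_integral 0"
  and lipschitz_integral_1 [simp]: "lipschitz_integral 1"
  by (simp_all add: lipschitz_integral_def)

lemma lipschitz_integral_ImHZ: "w \<in> ImHZ \<Longrightarrow> lipschitz_integral w"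
  by (auto simp: lipschitz_integral_def ImHZ_def)

text \<open>Quaternions with coordinates in \<open>(1/n) \<int>\<close> are encoded by integer 4-tuples, so that the
  needed closure properties of the 24 Hurwitz units become finite integer computations.\<close>

type_synonym coords = "int \<times> int \<times> int \<times> int"

fun scaled_quat :: "int \<Rightarrow> coords \<Rightarrow> quat" where
  "scaled_quat n (a, b, c, d) = Quat (of_int a / of_int n) (of_int b / of_int n) (of_int c / of_int n) (of_int d / of_int n)"

fun coords_mult :: "coords \<Rightarrow> coords \<Rightarrow> coords" where
  "coords_mult (a, b, c, d) (e, f, g, h) =
     (a*e - b*f - c*g - d*h, a*f + b*e + c*h - d*g, a*g - b*h + c*e + d*f, a*h + b*g - c*f + d*e)"

fun coords_cnj :: "coords \<Rightarrow> coords" where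
  "coords_cnj (a, b, c, d) = (a, - b, - c, - d)"

fun coords_scale :: "int \<Rightarrow> coords \<Rightarrow> coords" where
  "coords_scale k (a, b, c, d) = (k * a, k * b, k * c, k * d)"

fun coords_dvd :: "int \<Rightarrow> coords \<Rightarrow> bool" where
  "coords_dvd n (a, b, c, d) \<longleftrightarrow> n dvd a \<and> n dvd b \<and> n dvd c \<and> n dvd d"

lemma scaled_quat_mult: "scaled_quat m x * scaled_quat n y = scaled_quat (m * n) (coords_mult x y)"
  by (cases x; cases y) (simp add: quat_eq_iff add_divide_distrib diff_divide_distrib)

lemma scaled_quat_qcnj: "qcnj (scaled_quat n x) = scaled_quat n (coords_cnj x)"
  by (cases x) (simp add: quat_eq_iff)

lemma scaled_quat_scale: "k \<noteq> 0 \<Longrightarrow> scaled_quat (k * n) (coords_scale k x) = scaled_quat n x"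
  by (cases x) (simp add: quat_eq_iff)

lemma lipschitz_integral_scaled_quat: "coords_dvd n x \<Longrightarrow> lipschitz_integral (scaled_quat n x)"
  by (cases x) (auto simp: lipschitz_integral_def)

definition hurwitz_coords :: "coords list" where
  "hurwitz_coords = [(2,0,0,0), (-2,0,0,0), (0,2,0,0), (0,-2,0,0), (0,0,2,0), (0,0,-2,0), (0,0,0,2),
     (0,0,0,-2), (1,1,1,1), (1,1,1,-1), (1,1,-1,1), (1,1,-1,-1), (1,-1,1,1), (1,-1,1,-1),
     (1,-1,-1,1), (1,-1,-1,-1), (-1,1,1,1), (-1,1,1,-1), (-1,1,-1,1), (-1,1,-1,-1), (-1,-1,1,1),
     (-1,-1,1,-1), (-1,-1,-1,1), (-1,-1,-1,-1)]"

lemma hurwitz_units_eq_scaled_quat: "hurwitz_units = scaled_quat 2 ` set hurwitz_coords"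
proof
  show "hurwitz_units \<subseteq> scaled_quat 2 ` set hurwitz_coords"
  proof
    fix u assume "u \<in> hurwitz_units"
    then show "u \<in> scaled_quat 2 ` set hurwitz_coords"
    proof (cases rule: hurwitz_unitsE)
      case 1
      then show ?thesis unfolding lipschitz_units_def hurwitz_coords_def by (elim insertE emptyE) simp_all
    next
      case 2
      then show ?thesis unfolding hurwitz_coords_def by (elim insertE emptyE; hypsubst; simp)
    qed
  qed
  show "scaled_quat 2 ` set hurwitz_coords \<subseteq> hurwitz_units"
    unfolding hurwitz_coords_def
    by (simp add: Quat_half_in_hurwitz_units lipschitz_units_subset[THEN subsetD] lipschitz_units_def)
qed

lemma hurwitz_coords_mult_closed:
  "\<forall>x\<in>set hurwitz_coords. \<forall>y\<in>set hurwitz_coords. coords_mult x y \<in> coords_scale 2 ` set hurwitz_coords"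
  unfolding hurwitz_coords_def by code_simp

lemma hurwitz_coords_conj_basis:
  "\<forall>x\<in>set hurwitz_coords. \<forall>e\<in>{(1,0,0,0), (0,1,0,0), (0,0,1,0), (0,0,0,1)}.
     coords_dvd 4 (coords_mult (coords_mult x e) (coords_cnj x))"
  unfolding hurwitz_coords_def by code_simp

lemma hurwitz_units_mult:
  assumes "u \<in> hurwitz_units" "v \<in> hurwitz_units"
  shows "u * v \<in> hurwitz_units"
proof -
  obtain x y where xy: "x \<in> set hurwitz_coords" "y \<in> set hurwitz_coords"
    and u: "u = scaled_quat 2 x" and v: "v = scaled_quat 2 y"
    using assms unfolding hurwitz_units_eq_scaled_quat by blast
  obtain z where z: "z \<in> set hurwitz_coords" "coords_mult x y = coords_scale 2 z"
    using hurwitz_coords_mult_closed xy by blast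
  have "u * v = scaled_quat (2 * 2) (coords_scale 2 z)"
    unfolding u v scaled_quat_mult z(2) by simp
  also have "\<dots> = scaled_quat 2 z" by (rule scaled_quat_scale) simp
  finally show ?thesis using z(1) unfolding hurwitz_units_eq_scaled_quat by blast
qed

lemma lipschitz_integral_hurwitz_conj:
  assumes x: "lipschitz_integral x" and u: "u \<in> hurwitz_units"
  shows "lipschitz_integral (u * x * qcnj u)"
proof -
  obtain y where y: "y \<in> set hurwitz_coords" "u = scaled_quat 2 y"
    using u unfolding hurwitz_units_eq_scaled_quat by blast
  define conjugate where "conjugate e = u * scaled_quat 1 e * qcnj u" for e
  have basis: "lipschitz_integral (conjugate e)"
    if "e \<in> {(1,0,0,0), (0,1,0,0), (0,0,1,0), (0,0,0,1)}" for e
  proof -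
    have "conjugate e = scaled_quat 4 (coords_mult (coords_mult y e) (coords_cnj y))"
      unfolding conjugate_def y(2) scaled_quat_qcnj scaled_quat_mult by simp
    moreover have "coords_dvd 4 (coords_mult (coords_mult y e) (coords_cnj y))"
      using hurwitz_coords_conj_basis y(1) that by blast
    ultimately show ?thesis by (simp add: lipschitz_integral_scaled_quat)
  qed
  let ?x = "qreal (qre x) * scaled_quat 1 (1,0,0,0) + qreal (qi x) * scaled_quat 1 (0,1,0,0)
      + qreal (qj x) * scaled_quat 1 (0,0,1,0) + qreal (qk x) * scaled_quat 1 (0,0,0,1)"
  have "x = ?x" by (simp add: quat_eq_iff)
  then have "u * x * qcnj u = u * ?x * qcnj u" by simp
  moreover have "u * (qreal r * scaled_quat 1 e) * qcnj u = qreal r * conjugate e" for r e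
    unfolding conjugate_def by (metis mult.assoc qreal_commute)
  ultimately have "u * x * qcnj u = qreal (qre x) * conjugate (1,0,0,0) + qreal (qi x) * conjugate (0,1,0,0)
      + qreal (qj x) * conjugate (0,0,1,0) + qreal (qk x) * conjugate (0,0,0,1)"
    by (simp only: distrib_left distrib_right)
  then show ?thesis
    using x basis unfolding lipschitz_integral_def[of x]
    by (simp add: lipschitz_integral_add lipschitz_integral_qreal_mult)
qed

section \<open>The projective group\<close>

declare mmul.simps [simp del] mscale.simps [simp del]

lemma mmul_QM [simp]: "mmul (QM a b c d) (QM a' b' c' d') =
     QM (a * a' + b * c') (a * b' + b * d') (c * a' + d * c') (c * b' + d * d')"
  by (simp add: mmul.simps quat_ops_ring_1)

lemma mscale_QM [simp]: "mscale r (QM a b c d) = QM (qreal r * a) (qreal r * b) (qreal r * c) (qreal r * d)"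
  by (simp add: mscale.simps quat_ops_ring_1)

lemma mid_QM: "mid = QM 1 0 0 1"
  and Tm_QM: "Tm = QM 0 1 1 0"
  and taum_QM: "taum w = QM 1 w 0 1"
  and Dm_QM: "Dm u = QM u 0 0 u"
  by (simp_all add: mid_def Tm_def taum_def Dm_def quat_ops_ring_1)

lemma Dm_1: "Dm 1 = mid"
  by (simp add: Dm_QM mid_QM)

lemma mmul_assoc: "mmul (mmul M N) P = mmul M (mmul N P)"
  by (cases M; cases N; cases P) (simp add: algebra_simps)

lemma mmul_mid [simp]: "mmul mid M = M" "mmul M mid = M"
  by (cases M; simp add: mid_QM)+

lemma mscale_mmul: "mmul (mscale r M) (mscale s N) = mscale (r * s) (mmul M N)"
proof -
  have "qreal r * x * (qreal s * y) = qreal (r * s) * (x * y)" for x y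
    by (metis mult.assoc qreal_commute qreal_mult)
  then show ?thesis by (cases M; cases N) (simp add: distrib_left)
qed

lemma mscale_mscale: "mscale r (mscale s M) = mscale (r * s) M"
  by (cases M) (simp add: mult.assoc[symmetric] qreal_mult)

lemma mem_cls: "M \<in> cls M"
  unfolding cls_def by (rule CollectI, rule exI[of _ 1]) (cases M, simp)

lemma cls_mscale: "r \<noteq> 0 \<Longrightarrow> cls (mscale r M) = cls M"
  unfolding cls_def
  by (auto simp: mscale_mscale) (metis divide_eq_0_iff mscale_mscale nonzero_eq_divide_eq)

lemma pgl_mult_cls: "pgl_mult (cls M) (cls N) = cls (mmul M N)"
proof (rule Set.set_eqI, rule iffI)
  fix A assume "A \<in> pgl_mult (cls M) (cls N)"
  then obtain r s where "A = mmul (mscale r M) (mscale s N)" "r \<noteq> 0" "s \<noteq> 0"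
    unfolding pgl_mult_def cls_def by auto
  then show "A \<in> cls (mmul M N)" unfolding cls_def by (auto simp: mscale_mmul)
next
  fix A assume "A \<in> cls (mmul M N)"
  then obtain r where "A = mscale r (mmul M N)" "r \<noteq> 0" unfolding cls_def by auto
  then have "A = mmul (mscale r M) (mscale 1 N)" "mscale r M \<in> cls M" "mscale 1 N \<in> cls N"
    by (auto simp: mscale_mmul cls_def)
  then show "A \<in> pgl_mult (cls M) (cls N)" unfolding pgl_mult_def by blast
qed

lemma PGL_simps [simp]:
  "carrier PGL = cls ` {M. minvertible M}" "\<one>\<^bsub>PGL\<^esub> = cls mid"
  "cls M \<otimes>\<^bsub>PGL\<^esub> cls N = cls (mmul M N)"
  by (simp_all add: PGL_def pgl_mult_cls)

lemma cls_in_PGL: "minvertible M \<Longrightarrow> cls M \<in> carrier PGL"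
  by simp

lemma minvertible_mmul: "minvertible M \<Longrightarrow> minvertible N \<Longrightarrow> minvertible (mmul M N)"
  unfolding minvertible_def by (metis mmul_assoc mmul_mid)

lemma group_PGL: "group PGL"
proof (rule groupI)
  show "x \<otimes>\<^bsub>PGL\<^esub> y \<in> carrier PGL" if "x \<in> carrier PGL" "y \<in> carrier PGL" for x y
    using that by (auto intro: minvertible_mmul)
  show "\<one>\<^bsub>PGL\<^esub> \<in> carrier PGL"
    using cls_in_PGL[of mid] unfolding minvertible_def by auto
  show "x \<otimes>\<^bsub>PGL\<^esub> y \<otimes>\<^bsub>PGL\<^esub> z = x \<otimes>\<^bsub>PGL\<^esub> (y \<otimes>\<^bsub>PGL\<^esub> z)"
    if "x \<in> carrier PGL" "y \<in> carrier PGL" "z \<in> carrier PGL" for x y z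
    using that by (auto simp: mmul_assoc)
  show "\<one>\<^bsub>PGL\<^esub> \<otimes>\<^bsub>PGL\<^esub> x = x" if "x \<in> carrier PGL" for x
    using that by auto
  show "\<exists>y\<in>carrier PGL. y \<otimes>\<^bsub>PGL\<^esub> x = \<one>\<^bsub>PGL\<^esub>" if x: "x \<in> carrier PGL" for x
  proof -
    obtain M N where "x = cls M" "mmul M N = mid" "mmul N M = mid"
      using x by (auto simp: minvertible_def)
    then have "cls N \<in> carrier PGL" "cls N \<otimes>\<^bsub>PGL\<^esub> x = \<one>\<^bsub>PGL\<^esub>"
      using cls_in_PGL[of N] unfolding minvertible_def by auto
    then show ?thesis by blast
  qed
qed

interpretation PGL: group PGL
  by (rule group_PGL)

lemma cls_in_PGL_inverse:
  assumes "mmul M N = mid" "mmul N M = mid"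
  shows "cls M \<in> carrier PGL" "inv\<^bsub>PGL\<^esub> (cls M) = cls N"
proof -
  have "cls M \<in> carrier PGL" "cls N \<in> carrier PGL"
    using assms cls_in_PGL unfolding minvertible_def by blast+
  then show "cls M \<in> carrier PGL" "inv\<^bsub>PGL\<^esub> (cls M) = cls N"
    using assms by (simp_all add: PGL.inv_equality)
qed

lemma lipschitz_unitsI:
  assumes "lipschitz_integral q" "qnormsq q = 1"
  shows "q \<in> lipschitz_units"
proof -
  obtain n0 n1 n2 n3 :: int
    where c: "qre q = of_int n0" "qi q = of_int n1" "qj q = of_int n2" "qk q = of_int n3"
    using assms(1) unfolding lipschitz_integral_def by (auto elim!: Ints_cases)
  then have q: "q = Quat (of_int n0) (of_int n1) (of_int n2) (of_int n3)"
    by (simp add: quat_eq_iff)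
  have "real_of_int (n0\<^sup>2 + n1\<^sup>2 + n2\<^sup>2 + n3\<^sup>2) = 1"
    using assms(2) c unfolding qnormsq_def by simp
  then have n: "n0\<^sup>2 + n1\<^sup>2 + n2\<^sup>2 + n3\<^sup>2 = 1"
    by (simp only: of_int_eq_1_iff)
  have "n\<^sup>2 \<le> 1 \<Longrightarrow> n \<in> {-1, 0, 1}" for n :: int
    by (auto simp: abs_square_le_1)
  moreover have "n0\<^sup>2 \<le> 1" "n1\<^sup>2 \<le> 1" "n2\<^sup>2 \<le> 1" "n3\<^sup>2 \<le> 1"
    using n zero_le_power2[of n0] zero_le_power2[of n1] zero_le_power2[of n2] zero_le_power2[of n3]
    by linarith+
  ultimately have "n0 \<in> {-1, 0, 1}" "n1 \<in> {-1, 0, 1}" "n2 \<in> {-1, 0, 1}" "n3 \<in> {-1, 0, 1}"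
    by blast+
  then show ?thesis
    using n unfolding q lipschitz_units_def by (elim insertE emptyE; hypsubst; simp)
qed

lemma lipschitz_integral_qnormsq_Ints: "lipschitz_integral q \<Longrightarrow> qnormsq q \<in> \<int>"
  by (simp add: lipschitz_integral_def qnormsq_def)

section \<open>Matrices preserving the half-space\<close>

fun mstar :: "qmat \<Rightarrow> qmat" where
  "mstar (QM a b c d) = QM (qcnj a) (qcnj c) (qcnj b) (qcnj d)"

lemma mstar_mmul: "mstar (mmul M N) = mmul (mstar N) (mstar M)"
  by (cases M; cases N) (simp add: qcnj_add qcnj_mult)

text \<open>On the column \<open>(q, 1)\<close> the hermitian form with Gram matrix \<open>T\<close> takes the value
  \<open>q\<^sup>* + q = 2 Re q\<close>, so these are the matrices preserving the half-space model.\<close>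
definition T_unitary :: "qmat \<Rightarrow> bool" where
  "T_unitary M \<longleftrightarrow> mmul (mstar M) (mmul Tm M) = Tm"

lemma T_unitary_mmul: "T_unitary M \<Longrightarrow> T_unitary N \<Longrightarrow> T_unitary (mmul M N)"
  unfolding T_unitary_def mstar_mmul by (metis mmul_assoc)

lemma T_unitary_mid: "T_unitary mid"
  and T_unitary_Tm: "T_unitary Tm"
  by (simp_all add: T_unitary_def Tm_QM mid_QM)

lemma T_unitary_taum: "w \<in> ImHZ \<Longrightarrow> T_unitary (taum w)"
  by (auto simp: T_unitary_def Tm_QM taum_QM ImHZ_def quat_eq_iff)

lemma T_unitary_Dm: "qnormsq u = 1 \<Longrightarrow> T_unitary (Dm u)"
  by (simp add: T_unitary_def Tm_QM Dm_QM qcnj_mult_self_eq_1)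

lemma T_unitary_fixing_one:
  assumes "T_unitary (QM a b c d)" and sum: "a + b = c + d"
  shows "c = b" "d = a" "qnormsq a + qnormsq b = 1"
proof -
  from assms(1) have h1: "qcnj a * c + qcnj c * a = 0" and h2: "qcnj a * d + qcnj c * b = 1"
    and h3: "qcnj b * c + qcnj d * a = 1" and h4: "qcnj b * d + qcnj d * b = 0"
    unfolding T_unitary_def Tm_QM by simp_all
  define s where "s = c + d"
  \<comment> \<open>the sum of the four relations gives \<open>|s|\<^sup>2 = 1\<close>, an alternating sum gives
     \<open>s\<^sup>* ((a - b) + (c - d)) = 0\<close>\<close>
  have "qcnj (a + b) * (c + d) + qcnj (c + d) * (a + b)
      = (qcnj a * c + qcnj c * a) + (qcnj a * d + qcnj c * b) + (qcnj b * c + qcnj d * a) + (qcnj b * d + qcnj d * b)"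
    by (simp add: qcnj_add algebra_simps)
  then have "qcnj s * s + qcnj s * s = 1 + 1"
    using h1 h2 h3 h4 sum by (simp add: s_def)
  then have "s * qcnj s = 1"
    by (simp add: quat_eq_iff qcnj_mult_self quat_numeral_components)
  have "qcnj (c + d) * (a - b) + qcnj (a + b) * (c - d)
      = (qcnj a * c + qcnj c * a) - (qcnj a * d + qcnj c * b) + (qcnj b * c + qcnj d * a) - (qcnj b * d + qcnj d * b)"
    by (simp add: qcnj_add algebra_simps)
  then have "qcnj s * ((a - b) + (c - d)) = 0"
    using h1 h2 h3 h4 sum by (simp add: s_def distrib_left)
  then have "s * qcnj s * ((a - b) + (c - d)) = 0"
    by (simp add: mult.assoc)
  then have "(a - b) + (c - d) = 0"
    using \<open>s * qcnj s = 1\<close> by simp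
  with sum show cb: "c = b" and da: "d = a"
    by (simp_all add: quat_eq_iff)
  from h2 have "qreal (qnormsq a) + qreal (qnormsq b) = 1"
    by (simp add: cb da qcnj_mult_self)
  then show "qnormsq a + qnormsq b = 1"
    by (simp add: quat_eq_iff)
qed

fun lipschitz_matrix :: "qmat \<Rightarrow> bool" where
  "lipschitz_matrix (QM a b c d) \<longleftrightarrow>
     lipschitz_integral a \<and> lipschitz_integral b \<and> lipschitz_integral c \<and> lipschitz_integral d"

lemma lipschitz_matrix_mmul: "lipschitz_matrix M \<Longrightarrow> lipschitz_matrix N \<Longrightarrow> lipschitz_matrix (mmul M N)"
  by (cases M; cases N) (simp add: lipschitz_integral_add lipschitz_integral_mult)

definition lipschitz_T_unitary :: "qmat \<Rightarrow> bool" where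
  "lipschitz_T_unitary M \<longleftrightarrow> T_unitary M \<and> lipschitz_matrix M"

lemma lipschitz_T_unitary_mmul:
  "lipschitz_T_unitary M \<Longrightarrow> lipschitz_T_unitary N \<Longrightarrow> lipschitz_T_unitary (mmul M N)"
  by (simp add: lipschitz_T_unitary_def T_unitary_mmul lipschitz_matrix_mmul)

lemma lipschitz_T_unitary_mid: "lipschitz_T_unitary mid"
  and lipschitz_T_unitary_Tm: "lipschitz_T_unitary Tm"
  using T_unitary_mid T_unitary_Tm by (simp_all add: lipschitz_T_unitary_def mid_QM Tm_QM)

lemma lipschitz_T_unitary_taum:
  assumes "w \<in> ImHZ"
  shows "lipschitz_T_unitary (taum w)"
  using T_unitary_taum[OF assms] lipschitz_integral_ImHZ[OF assms]
  by (simp add: lipschitz_T_unitary_def taum_QM)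

lemma lipschitz_T_unitary_fixing_one:
  assumes "lipschitz_T_unitary M" "mob M qone = qone"
  obtains v where "v \<in> lipschitz_units" "M = QM v 0 0 v"
    | v where "v \<in> lipschitz_units" "M = QM 0 v v 0"
proof -
  obtain a b c d where M: "M = QM a b c d" by (cases M)
  have sum: "a + b = c + d"
    using assms(2) by (simp add: M quat_ops_ring_1 mult_qinv_eq_1_iff)
  have cb: "c = b" and da: "d = a" and norms: "qnormsq a + qnormsq b = 1"
    using T_unitary_fixing_one[OF _ sum] assms(1) by (simp_all add: M lipschitz_T_unitary_def)
  have a: "lipschitz_integral a" and b: "lipschitz_integral b"
    using assms(1) by (simp_all add: M lipschitz_T_unitary_def)
  obtain m n :: int where m: "qnormsq a = of_int m" and n: "qnormsq b = of_int n"
    using lipschitz_integral_qnormsq_Ints[OF a] lipschitz_integral_qnormsq_Ints[OF b]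
    by (auto elim!: Ints_cases)
  have "0 \<le> m" "0 \<le> n"
    using m n qnormsq_nonneg[of a] qnormsq_nonneg[of b] by simp_all
  moreover have "m + n = 1"
    using norms m n by (metis of_int_add of_int_eq_1_iff)
  ultimately have "(m = 0 \<and> n = 1) \<or> (m = 1 \<and> n = 0)"
    by arith
  then have "(qnormsq a = 0 \<and> qnormsq b = 1) \<or> (qnormsq a = 1 \<and> qnormsq b = 0)"
    using m n by auto
  then show thesis
  proof (elim disjE conjE)
    assume "qnormsq a = 0" "qnormsq b = 1"
    then show thesis
      using that(2)[of b] lipschitz_unitsI[OF b] by (simp add: M cb da qnormsq_eq_0_iff)
  next
    assume "qnormsq a = 1" "qnormsq b = 0"
    then show thesis
      using that(1)[of a] lipschitz_unitsI[OF a] by (simp add: M cb da qnormsq_eq_0_iff)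
  qed
qed

text \<open>Conjugation by a Hurwitz unit preserves Lipschitz matrices, so these matrices are closed under
  products; every element of the Hurwitz group has such a representative.\<close>
definition hurwitz_T_unitary :: "qmat \<Rightarrow> bool" where
  "hurwitz_T_unitary N \<longleftrightarrow> (\<exists>M u. N = mmul M (Dm u) \<and> lipschitz_T_unitary M \<and> u \<in> hurwitz_units)"

lemma lipschitz_T_unitary_hurwitz_conj:
  assumes M: "lipschitz_T_unitary M" and u: "u \<in> hurwitz_units"
  shows "lipschitz_T_unitary (mmul (Dm u) (mmul M (Dm (qcnj u))))"
proof -
  have "qnormsq u = 1" "qnormsq (qcnj u) = 1"
    using u hurwitz_units_qcnj hurwitz_units_qnormsq by blast+
  then have "T_unitary (mmul (Dm u) (mmul M (Dm (qcnj u))))"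
    using M by (intro T_unitary_mmul T_unitary_Dm) (simp_all add: lipschitz_T_unitary_def)
  moreover obtain a b c d where "M = QM a b c d" by (cases M)
  then have "lipschitz_matrix (mmul (Dm u) (mmul M (Dm (qcnj u))))"
    using M lipschitz_integral_hurwitz_conj[OF _ u]
    by (simp add: Dm_QM mult.assoc lipschitz_T_unitary_def)
  ultimately show ?thesis by (simp add: lipschitz_T_unitary_def)
qed

lemma hurwitz_T_unitary_mmul:
  assumes "hurwitz_T_unitary N1" "hurwitz_T_unitary N2"
  shows "hurwitz_T_unitary (mmul N1 N2)"
proof -
  obtain M1 u M2 v where N: "N1 = mmul M1 (Dm u)" "N2 = mmul M2 (Dm v)"
    and M: "lipschitz_T_unitary M1" "lipschitz_T_unitary M2"
    and uv: "u \<in> hurwitz_units" "v \<in> hurwitz_units"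
    using assms unfolding hurwitz_T_unitary_def by blast
  let ?C = "mmul (Dm u) (mmul M2 (Dm (qcnj u)))"
  have "mmul (Dm (qcnj u)) (Dm (u * v)) = Dm v"
    using qcnj_mult_self_eq_1(1)[OF hurwitz_units_qnormsq[OF uv(1)]]
    by (simp add: Dm_QM mult.assoc[symmetric])
  then have "mmul N1 N2 = mmul (mmul M1 ?C) (Dm (u * v))"
    unfolding N by (simp add: mmul_assoc)
  moreover have "lipschitz_T_unitary (mmul M1 ?C)"
    using M uv by (simp add: lipschitz_T_unitary_mmul lipschitz_T_unitary_hurwitz_conj)
  ultimately show ?thesis
    using hurwitz_units_mult[OF uv] unfolding hurwitz_T_unitary_def by blast
qed

lemma hurwitz_T_unitary_lipschitz: "lipschitz_T_unitary M \<Longrightarrow> hurwitz_T_unitary M"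
  unfolding hurwitz_T_unitary_def using one_in_lipschitz_units lipschitz_units_subset
  by (intro exI[of _ M] exI[of _ 1]) (auto simp: Dm_1)

lemma hurwitz_T_unitary_Dm: "u \<in> hurwitz_units \<Longrightarrow> hurwitz_T_unitary (Dm u)"
  unfolding hurwitz_T_unitary_def using lipschitz_T_unitary_mid
  by (intro exI[of _ mid] exI[of _ u]) simp

lemma generate_PGL_representative:
  assumes "A \<in> generate PGL S"
    and "P mid" and "\<And>M N. P M \<Longrightarrow> P N \<Longrightarrow> P (mmul M N)"
    and "\<And>B. B \<in> S \<Longrightarrow> \<exists>M. B = cls M \<and> P M"
    and "\<And>B. B \<in> S \<Longrightarrow> \<exists>M. inv\<^bsub>PGL\<^esub> B = cls M \<and> P M"
  shows "\<exists>M. A = cls M \<and> P M"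
  using assms(1)
proof induction
  case one
  then show ?case using assms(2) by auto
next
  case (eng B C)
  then obtain M N where "B = cls M" "P M" "C = cls N" "P N" by blast
  then show ?case using assms(3) by (intro exI[of _ "mmul M N"]) simp
qed (use assms(4,5) in blast)+

lemma cls_Tm_in_PGL: "cls Tm \<in> carrier PGL"
  and inv_cls_Tm: "inv\<^bsub>PGL\<^esub> (cls Tm) = cls Tm"
  and cls_Tm_square: "cls Tm \<otimes>\<^bsub>PGL\<^esub> cls Tm = \<one>\<^bsub>PGL\<^esub>"
proof -
  have "mmul Tm Tm = mid" by (simp add: Tm_QM mid_QM)
  then show "cls Tm \<in> carrier PGL" "inv\<^bsub>PGL\<^esub> (cls Tm) = cls Tm" "cls Tm \<otimes>\<^bsub>PGL\<^esub> cls Tm = \<one>\<^bsub>PGL\<^esub>"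
    using cls_in_PGL_inverse by simp_all
qed

lemma cls_taum_in_PGL: "cls (taum w) \<in> carrier PGL"
  and inv_cls_taum: "inv\<^bsub>PGL\<^esub> (cls (taum w)) = cls (taum (- w))"
proof -
  have "mmul (taum w) (taum (- w)) = mid" "mmul (taum (- w)) (taum w) = mid"
    by (simp_all add: taum_QM mid_QM)
  then show "cls (taum w) \<in> carrier PGL" "inv\<^bsub>PGL\<^esub> (cls (taum w)) = cls (taum (- w))"
    using cls_in_PGL_inverse by simp_all
qed

lemma cls_Dm_in_PGL: "qnormsq u = 1 \<Longrightarrow> cls (Dm u) \<in> carrier PGL"
  and inv_cls_Dm: "qnormsq u = 1 \<Longrightarrow> inv\<^bsub>PGL\<^esub> (cls (Dm u)) = cls (Dm (qcnj u))"
proof -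
  assume "qnormsq u = 1"
  then have "mmul (Dm u) (Dm (qcnj u)) = mid" "mmul (Dm (qcnj u)) (Dm u) = mid"
    by (simp_all add: Dm_QM mid_QM qcnj_mult_self_eq_1)
  then show "cls (Dm u) \<in> carrier PGL" "inv\<^bsub>PGL\<^esub> (cls (Dm u)) = cls (Dm (qcnj u))"
    using cls_in_PGL_inverse by simp_all
qed

lemma ImHZ_uminus:
  assumes "w \<in> ImHZ"
  shows "- w \<in> ImHZ"
proof -
  obtain b c d where "w = Quat 0 (of_int b) (of_int c) (of_int d)"
    using assms unfolding ImHZ_def by blast
  then have "- w = Quat 0 (of_int (- b)) (of_int (- c)) (of_int (- d))"
    by (simp add: quat_eq_iff)
  then show ?thesis unfolding ImHZ_def by blast
qed

lemma PSL2L_representative: "A \<in> PSL2L \<Longrightarrow> \<exists>M. A = cls M \<and> lipschitz_T_unitary M"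
  unfolding PSL2L_def
  by (erule generate_PGL_representative)
    (auto simp: lipschitz_T_unitary_mid lipschitz_T_unitary_mmul lipschitz_T_unitary_Tm
      lipschitz_T_unitary_taum inv_cls_Tm inv_cls_taum ImHZ_uminus)

lemma PSL2H_representative: "A \<in> PSL2H \<Longrightarrow> \<exists>N. A = cls N \<and> hurwitz_T_unitary N"
  unfolding PSL2H_def
proof (erule generate_PGL_representative)
  fix B assume "B \<in> {cls Tm} \<union> {cls (taum w) |w. w \<in> ImHZ} \<union> UH"
  then consider "B = cls Tm" | w where "w \<in> ImHZ" "B = cls (taum w)"
    | u where "u \<in> hurwitz_units" "B = cls (Dm u)"
    unfolding UH_def by blast
  then show "\<exists>N. B = cls N \<and> hurwitz_T_unitary N" "\<exists>N. inv\<^bsub>PGL\<^esub> B = cls N \<and> hurwitz_T_unitary N"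
    by (cases; use inv_cls_Tm inv_cls_taum inv_cls_Dm hurwitz_units_qnormsq hurwitz_units_qcnj
        hurwitz_T_unitary_Dm hurwitz_T_unitary_lipschitz lipschitz_T_unitary_Tm
        lipschitz_T_unitary_taum ImHZ_uminus in auto)+
qed (simp_all add: hurwitz_T_unitary_lipschitz lipschitz_T_unitary_mid hurwitz_T_unitary_mmul)

section \<open>The stabiliser of \<open>1\<close>\<close>

definition quat_unit_group :: "quat set \<Rightarrow> bool" where
  "quat_unit_group U \<longleftrightarrow> 1 \<in> U \<and> (\<forall>u\<in>U. \<forall>v\<in>U. u * v \<in> U) \<and> (\<forall>u\<in>U. qcnj u \<in> U \<and> qnormsq u = 1)"

lemma quat_unit_group_lipschitz_units: "quat_unit_group lipschitz_units"
  unfolding quat_unit_group_def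
  using one_in_lipschitz_units lipschitz_units_mult lipschitz_units_qcnj lipschitz_units_qnormsq
  by blast

lemma quat_unit_group_hurwitz_units: "quat_unit_group hurwitz_units"
  unfolding quat_unit_group_def
  using one_in_lipschitz_units lipschitz_units_subset hurwitz_units_mult hurwitz_units_qcnj
    hurwitz_units_qnormsq
  by blast

definition unit_classes :: "quat set \<Rightarrow> qmat set set" where
  "unit_classes U = {cls (Dm u) | u. u \<in> U}"

lemma subgroup_unit_classes:
  assumes U: "quat_unit_group U"
  shows "subgroup (unit_classes U) PGL"
proof (rule PGL.subgroupI)
  have unit: "u \<in> U \<Longrightarrow> qnormsq u = 1 \<and> qcnj u \<in> U" for u
    using U by (simp add: quat_unit_group_def)
  show "unit_classes U \<subseteq> carrier PGL"
    using unit cls_Dm_in_PGL unfolding unit_classes_def by blast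
  show "unit_classes U \<noteq> {}"
    using U unfolding unit_classes_def quat_unit_group_def by blast
  show "inv\<^bsub>PGL\<^esub> A \<in> unit_classes U" if A: "A \<in> unit_classes U" for A
  proof -
    obtain u where "u \<in> U" "A = cls (Dm u)" using A unfolding unit_classes_def by blast
    then have "inv\<^bsub>PGL\<^esub> A = cls (Dm (qcnj u))" "qcnj u \<in> U"
      using unit inv_cls_Dm by simp_all
    then show ?thesis unfolding unit_classes_def by blast
  qed
  show "A \<otimes>\<^bsub>PGL\<^esub> B \<in> unit_classes U" if AB: "A \<in> unit_classes U" "B \<in> unit_classes U" for A B
  proof -
    obtain u v where "u \<in> U" "v \<in> U" "A = cls (Dm u)" "B = cls (Dm v)"
      using AB unfolding unit_classes_def by blast
    then have "A \<otimes>\<^bsub>PGL\<^esub> B = cls (Dm (u * v))" "u * v \<in> U"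
      using U by (simp_all add: Dm_QM quat_unit_group_def)
    then show ?thesis unfolding unit_classes_def by blast
  qed
qed

definition unit_T_classes :: "quat set \<Rightarrow> qmat set set" where
  "unit_T_classes U = unit_classes U \<union> (\<lambda>B. cls Tm \<otimes>\<^bsub>PGL\<^esub> B) ` unit_classes U"

lemma cls_Tm_commute: "A \<in> unit_classes U \<Longrightarrow> cls Tm \<otimes>\<^bsub>PGL\<^esub> A = A \<otimes>\<^bsub>PGL\<^esub> cls Tm"
  unfolding unit_classes_def by (auto simp: Tm_QM Dm_QM)

lemma cls_Tm_notin_unit_classes: "cls Tm \<notin> unit_classes U"
proof
  assume "cls Tm \<in> unit_classes U"
  then obtain u where "Tm \<in> cls (Dm u)" using mem_cls unfolding unit_classes_def by force
  then show False by (auto simp: cls_def Tm_QM Dm_QM)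
qed

lemma mem_unit_T_classes_iff:
  "A \<in> unit_T_classes U \<longleftrightarrow>
     (\<exists>u\<in>U. A = cls (QM u 0 0 u) \<or> A = cls (QM 0 u u 0))"
proof -
  have "(\<lambda>B. cls Tm \<otimes>\<^bsub>PGL\<^esub> B) ` unit_classes U = {cls Tm \<otimes>\<^bsub>PGL\<^esub> cls (Dm u) | u. u \<in> U}"
    unfolding unit_classes_def by blast
  also have "\<dots> = {cls (QM 0 u u 0) | u. u \<in> U}"
    by (simp add: Tm_QM Dm_QM)
  finally show ?thesis unfolding unit_T_classes_def unit_classes_def Dm_QM by blast
qed

lemma unit_T_classes_fix_one:
  assumes "quat_unit_group U" "A \<in> unit_T_classes U"
    and "m \<in> A"
  shows "mob m qone = qone"
proof -
  obtain u where "u \<in> U" "A = cls (QM u 0 0 u) \<or> A = cls (QM 0 u u 0)"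
    using assms(2) mem_unit_T_classes_iff by blast
  moreover obtain r where r: "r \<noteq> 0" and "m = mscale r (QM u 0 0 u) \<or> m = mscale r (QM 0 u u 0)"
    using assms(3) calculation(2) unfolding cls_def by blast
  ultimately have "m = QM (qreal r * u) 0 0 (qreal r * u) \<or> m = QM 0 (qreal r * u) (qreal r * u) 0"
    by simp
  moreover have "u \<noteq> 0"
    using \<open>u \<in> U\<close> assms(1) by (auto simp: quat_unit_group_def qnormsq_def)
  then have "qreal r * u \<noteq> 0"
    using r by (simp add: qreal_mult_eq_0_iff)
  ultimately show ?thesis
    by (elim disjE) (simp_all add: quat_ops_ring_1 mult_qinv_eq_1_iff)
qed

lemma generate_Tm_unit_classes:
  assumes "quat_unit_group U"
  shows "generate PGL ({cls Tm} \<union> unit_classes U)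
      = unit_T_classes U"
  unfolding unit_T_classes_def
  by (rule PGL.generate_insert_central_involution[OF subgroup_unit_classes[OF assms]
        cls_Tm_in_PGL cls_Tm_square cls_Tm_commute])

lemma iso_unit_T_classes:
  assumes "quat_unit_group U"
  shows "PGL\<lparr>carrier := unit_T_classes U\<rparr>
      \<cong> integer_mod_group 2 \<times>\<times> PGL\<lparr>carrier := unit_classes U\<rparr>"
  unfolding unit_T_classes_def
  by (rule PGL.iso_union_image_central_involution[OF subgroup_unit_classes[OF assms]
        cls_Tm_in_PGL cls_Tm_square cls_Tm_commute cls_Tm_notin_unit_classes])

lemma subgroup_PSL2L: "subgroup PSL2L PGL"
proof -
  have "{cls Tm} \<union> {cls (taum w) | w. w \<in> ImHZ} \<subseteq> carrier PGL"
    using cls_Tm_in_PGL cls_taum_in_PGL by blast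
  then show ?thesis unfolding PSL2L_def by (rule PGL.generate_is_subgroup)
qed

text \<open>The witness: \<open>(\<tau>\<^sub>w T)\<^sup>3 = D\<^sub>w\<close> whenever \<open>w\<^sup>2 = -1\<close>.\<close>
lemma cls_Dm_in_PSL2L:
  assumes "w \<in> ImHZ" "w * w = -1"
  shows "cls (Dm w) \<in> PSL2L"
proof -
  let ?X = "cls (taum w) \<otimes>\<^bsub>PGL\<^esub> cls Tm"
  note sub = subgroup_PSL2L
  have "cls (taum w) \<in> PSL2L" "cls Tm \<in> PSL2L"
    unfolding PSL2L_def using assms(1) by (auto intro: generate.incl)
  then have X: "?X \<in> PSL2L" using subgroup.m_closed[OF sub] by blast
  have "cls (Dm w) = ?X \<otimes>\<^bsub>PGL\<^esub> (?X \<otimes>\<^bsub>PGL\<^esub> ?X)"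
    using assms(2) by (simp add: taum_QM Tm_QM Dm_QM algebra_simps)
  then show ?thesis using X subgroup.m_closed[OF sub] by metis
qed

lemma UL_subset_PSL2L: "UL \<subseteq> PSL2L"
proof
  fix A assume "A \<in> UL"
  then obtain u where A: "A = cls (Dm u)" and u: "u \<in> lipschitz_units" unfolding UL_def by blast
  have "cls (Dm 1) \<in> PSL2L"
    using generate.one[of PGL] unfolding PSL2L_def by (simp add: Dm_1)
  moreover have "cls (Dm (Quat 0 1 0 0)) \<in> PSL2L" "cls (Dm (Quat 0 0 1 0)) \<in> PSL2L"
    "cls (Dm (Quat 0 0 0 1)) \<in> PSL2L"
    by (rule cls_Dm_in_PSL2L; force simp: ImHZ_def quat_eq_iff)+
  moreover have "cls (Dm (- v)) = cls (Dm v)" for v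
  proof -
    have "mscale (-1) (Dm v) = Dm (- v)" by (simp add: Dm_QM quat_eq_iff)
    then show ?thesis using cls_mscale[of "-1" "Dm v"] by simp
  qed
  moreover have "Quat 1 0 0 0 = 1" "Quat (-1) 0 0 0 = - 1" "Quat 0 (-1) 0 0 = - Quat 0 1 0 0"
    "Quat 0 0 (-1) 0 = - Quat 0 0 1 0" "Quat 0 0 0 (-1) = - Quat 0 0 0 1"
    by (simp_all add: quat_eq_iff)
  ultimately show "A \<in> PSL2L" using u unfolding A lipschitz_units_def by auto
qed

lemma UL_eq_unit_classes: "UL = unit_classes lipschitz_units"
  and UH_eq_unit_classes: "UH = unit_classes hurwitz_units"
  by (simp_all add: UL_def UH_def unit_classes_def)

lemma unit_T_classes_subset_stabiliser:
  assumes U: "quat_unit_group U" and gen: "generate PGL ({cls Tm} \<union> unit_classes U) \<subseteq> G"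
  shows "unit_T_classes U \<subseteq> {A \<in> G. \<forall>m\<in>A. mob m qone = qone}"
  using gen unit_T_classes_fix_one[OF U] unfolding generate_Tm_unit_classes[OF U] by blast

lemma UhatL_eq: "UhatL = unit_T_classes lipschitz_units"
proof
  show "UhatL \<subseteq> unit_T_classes lipschitz_units"
  proof
    fix A assume A: "A \<in> UhatL"
    then obtain M where M: "A = cls M" "lipschitz_T_unitary M"
      using PSL2L_representative unfolding UhatL_def by blast
    have "mob M qone = qone" using A M(1) mem_cls[of M] unfolding UhatL_def by blast
    with M(2) show "A \<in> unit_T_classes lipschitz_units"
      unfolding mem_unit_T_classes_iff M(1)
      by (cases rule: lipschitz_T_unitary_fixing_one) (intro bexI; simp; fail)+
  qed
  have "cls Tm \<in> PSL2L" unfolding PSL2L_def by (rule generate.incl) simp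
  then have "generate PGL ({cls Tm} \<union> unit_classes lipschitz_units) \<subseteq> PSL2L"
    using UL_subset_PSL2L unfolding UL_eq_unit_classes
    by (intro PGL.generate_subgroup_incl[OF _ subgroup_PSL2L]) blast
  then show "unit_T_classes lipschitz_units \<subseteq> UhatL"
    unfolding UhatL_def by (rule unit_T_classes_subset_stabiliser[OF quat_unit_group_lipschitz_units])
qed

lemma mob_mmul_Dm_fixes_one:
  assumes "qnormsq u = 1" "mob (mmul M (Dm u)) qone = qone"
  shows "mob M qone = qone"
proof -
  obtain a b c d where M: "M = QM a b c d" by (cases M)
  from assms(2) have "c * u + d * u \<noteq> 0" and eq: "a * u + b * u = c * u + d * u"
    by (simp_all add: M Dm_QM quat_ops_ring_1 mult_qinv_eq_1_iff)
  then have "c + d \<noteq> 0" by (auto simp: distrib_right[symmetric])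
  have unit: "u * qcnj u = 1" using qcnj_mult_self_eq_1(2)[OF assms(1)] .
  have "a + b = (a * u + b * u) * qcnj u" by (simp add: distrib_right mult.assoc unit)
  also have "\<dots> = c + d" by (simp add: eq distrib_right mult.assoc unit)
  finally show ?thesis using \<open>c + d \<noteq> 0\<close> by (simp add: M quat_ops_ring_1 mult_qinv_eq_1_iff)
qed

lemma UhatH_eq: "UhatH = unit_T_classes hurwitz_units"
proof
  show "UhatH \<subseteq> unit_T_classes hurwitz_units"
  proof
    fix A assume A: "A \<in> UhatH"
    then obtain M u where N: "A = cls (mmul M (Dm u))" and M: "lipschitz_T_unitary M"
      and u: "u \<in> hurwitz_units"
      using PSL2H_representative unfolding UhatH_def hurwitz_T_unitary_def by blast
    have "mob (mmul M (Dm u)) qone = qone" using A N mem_cls unfolding UhatH_def by blast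
    then have "mob M qone = qone" using mob_mmul_Dm_fixes_one hurwitz_units_qnormsq[OF u] by blast
    with M show "A \<in> unit_T_classes hurwitz_units"
    proof (cases rule: lipschitz_T_unitary_fixing_one)
      case (1 v)
      then have "v * u \<in> hurwitz_units" "A = cls (QM (v * u) 0 0 (v * u))"
        using N u hurwitz_units_mult lipschitz_units_subset by (auto simp: Dm_QM)
      then show ?thesis unfolding mem_unit_T_classes_iff by blast
    next
      case (2 v)
      then have "v * u \<in> hurwitz_units" "A = cls (QM 0 (v * u) (v * u) 0)"
        using N u hurwitz_units_mult lipschitz_units_subset by (auto simp: Dm_QM)
      then show ?thesis unfolding mem_unit_T_classes_iff by blast
    qed
  qed
  have "generate PGL ({cls Tm} \<union> unit_classes hurwitz_units) \<subseteq> PSL2H"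
    unfolding PSL2H_def UH_eq_unit_classes by (rule PGL.mono_generate) blast
  then show "unit_T_classes hurwitz_units \<subseteq> UhatH"
    unfolding UhatH_def by (rule unit_T_classes_subset_stabiliser[OF quat_unit_group_hurwitz_units])
qed

theorem mainTheorem5:
  shows "UhatL = generate PGL ({cls Tm} \<union> UL)
    \<and> UhatH = generate PGL ({cls Tm} \<union> UH)
    \<and> (\<forall>A \<in> UH. cls Tm \<otimes>\<^bsub>PGL\<^esub> A = A \<otimes>\<^bsub>PGL\<^esub> cls Tm)
    \<and> PGL\<lparr>carrier := UhatL\<rparr> \<cong> integer_mod_group 2 \<times>\<times> PGL\<lparr>carrier := UL\<rparr>
    \<and> PGL\<lparr>carrier := UhatH\<rparr> \<cong> integer_mod_group 2 \<times>\<times> PGL\<lparr>carrier := UH\<rparr>"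
  unfolding UL_eq_unit_classes UH_eq_unit_classes UhatL_eq UhatH_eq
  using generate_Tm_unit_classes iso_unit_T_classes cls_Tm_commute
    quat_unit_group_lipschitz_units quat_unit_group_hurwitz_units
  by simp

end
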